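(* Let $n\ge3$, $\mu\in\mathbb{C}$, and let $\lambda=(\lambda_1,\dots,\lambda_n)\in\mathbb{C}^n$ satisfy $\lambda_1-\lambda_2=\cdots=\lambda_{n-2}-\lambda_{n-1}=\mu$ and $\sigma:=\lambda_{n-1}-\lambda_n\notin\mathbb{N}$. Then the element $$u_\lambda=(x_1x_2\cdots x_n)^{\mu}\sum_{i_1,\dots,i_{n-1}=0}^{\infty}\frac{(-1)^{i_1+\cdots+i_{n-1}}\langle\mu\rangle_{i_{n-1}}}{i_1!\cdots i_{n-1}!\,\langle\sigma\rangle_{i_{n-1}}}\,E_{2,1}^{i_1}E_{3,2}^{i_2}\cdots E_{n,n-1}^{i_{n-1}}v_\lambda\; x_1^{i_1}x_2^{i_2-i_1}\cdots x_{n-1}^{i_{n-1}-i_{n-2}}x_n^{-i_{n-1}}$$ of $\widetilde M$ is a singular vector of weight $\lambda$: $E_{i,j}u_\lambda=0$ for all $1\le i<j\le n$ and $E_{k,k}u_\lambda=\lambda_ku_\lambda$ for all $k$.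
   Context: $gl(n)$ has basis of matrix units $E_{i,j}$. $\langle c\rangle_i=c(c-1)\cdots(c-i+1)$, $\langle c\rangle_0=1$. $M_\lambda$ is the Verma $gl(n)$-module with highest weight vector $v_\lambda$: $E_{i,j}v_\lambda=0$ for $i<j$, $E_{k,k}v_\lambda=\lambda_kv_\lambda$. $\widetilde M$ is the space of formal series $\sum_{\vec i\in\mathbb{Z}^n}v_{\vec i}\,x_1^{i_1+\mu}\cdots x_n^{i_n+\mu}$ with $v_{\vec i}\in M_\lambda$ arbitrary, a $gl(n)$-module via $E_{j_1,j_2}(v\,x^m)=E_{j_1,j_2}(v)\,x^m+v\,(x_{j_1}\partial_{x_{j_2}}-\mu\delta_{j_1,j_2})(x^m)$ (isomorphic to the weight-completed tensor product of $M_\lambda$ with the point representation $E_{i,j}\mapsto x_i\partial_{x_j}-\mu\delta_{i,j}$). *)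

theory Defs
  imports Complex_Main
begin

definition ffac :: "complex \<Rightarrow> nat \<Rightarrow> complex" where
  "ffac c i = (\<Prod>j<i. c - of_nat j)"

definition gl_module ::
  "(complex \<Rightarrow> 'v::ab_group_add \<Rightarrow> 'v) \<Rightarrow> nat \<Rightarrow> (nat \<Rightarrow> nat \<Rightarrow> 'v \<Rightarrow> 'v) \<Rightarrow> bool" where
  "gl_module sm n rho \<longleftrightarrow> Vector_Spaces.vector_space sm \<and>
     (\<forall>i\<in>{1..n}. \<forall>j\<in>{1..n}. Vector_Spaces.linear sm sm (rho i j)) \<and>
     (\<forall>i\<in>{1..n}. \<forall>j\<in>{1..n}. \<forall>k\<in>{1..n}. \<forall>l\<in>{1..n}. \<forall>w.
        rho i j (rho k l w) - rho k l (rho i j w)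
          = (if j = k then rho i l w else 0) - (if l = i then rho k j w else 0))"

definition neg_roots :: "nat \<Rightarrow> (nat \<times> nat) list" where
  "neg_roots n = [(i, j). i \<leftarrow> [2..<n+1], j \<leftarrow> [1..<i]]"

definition pbw_mono ::
  "nat \<Rightarrow> (nat \<Rightarrow> nat \<Rightarrow> 'v \<Rightarrow> 'v) \<Rightarrow> 'v \<Rightarrow> (nat \<Rightarrow> nat \<Rightarrow> nat) \<Rightarrow> 'v" where
  "pbw_mono n rho v a = foldr (\<lambda>(i, j) w. (rho i j ^^ a i j) w) (neg_roots n) v"

definition pbw_exps :: "nat \<Rightarrow> (nat \<Rightarrow> nat \<Rightarrow> nat) set" where
  "pbw_exps n = {a. \<forall>i j. a i j \<noteq> 0 \<longrightarrow> 1 \<le> j \<and> j < i \<and> i \<le> n}"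

text \<open>(V, rho) with vector v is (isomorphic to) the Verma module M_lambda with highest
  weight vector v_lambda = v: v is a highest weight vector of weight lambda, and the ordered
  PBW monomials in the E_{i,j} (i>j) applied to v form a basis of V (i.e. V is free of
  rank one over U(n^-) on v).\<close>
definition verma_module ::
  "(complex \<Rightarrow> 'v::ab_group_add \<Rightarrow> 'v) \<Rightarrow> nat \<Rightarrow> (nat \<Rightarrow> nat \<Rightarrow> 'v \<Rightarrow> 'v)
     \<Rightarrow> (nat \<Rightarrow> complex) \<Rightarrow> 'v \<Rightarrow> bool" where
  "verma_module sm n rho lam v \<longleftrightarrow> gl_module sm n rho \<and>
     (\<forall>i\<in>{1..n}. \<forall>j\<in>{1..n}. i < j \<longrightarrow> rho i j v = 0) \<and>
     (\<forall>k\<in>{1..n}. rho k k v = sm (lam k) v) \<and>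
     inj_on (pbw_mono n rho v) (pbw_exps n) \<and>
     \<not> module.dependent sm (pbw_mono n rho v ` pbw_exps n) \<and>
     module.span sm (pbw_mono n rho v ` pbw_exps n) = UNIV"

text \<open>Elements of M~: a formal series  sum_m f(m) x_1^(m_1+mu) ... x_n^(m_n+mu)  is
  represented by its coefficient function f on exponent vectors m :: nat \<Rightarrow> int
  (only the components 1..n are meaningful; series are taken to vanish on vectors
  with nonzero components outside 1..n).
  Action of E_{j1,j2}:  E(v x^m) = E(v) x^m + v (x_{j1} d/dx_{j2} - mu delta_{j1,j2}) x^m.
  The coefficient at m of the second part comes from the term at m' = m - e_{j1} + e_{j2}.\<close>
definition shift :: "nat \<Rightarrow> nat \<Rightarrow> (nat \<Rightarrow> int) \<Rightarrow> (nat \<Rightarrow> int)" where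
  "shift j1 j2 m = (\<lambda>k. m k - (if k = j1 then 1 else 0) + (if k = j2 then 1 else 0))"

definition act_tilde ::
  "(complex \<Rightarrow> 'v::ab_group_add \<Rightarrow> 'v) \<Rightarrow> (nat \<Rightarrow> nat \<Rightarrow> 'v \<Rightarrow> 'v) \<Rightarrow> complex
     \<Rightarrow> nat \<Rightarrow> nat \<Rightarrow> ((nat \<Rightarrow> int) \<Rightarrow> 'v) \<Rightarrow> ((nat \<Rightarrow> int) \<Rightarrow> 'v)" where
  "act_tilde sm rho mu j1 j2 f = (\<lambda>m.
      rho j1 j2 (f m)
      + sm (of_int (shift j1 j2 m j2) + mu) (f (shift j1 j2 m))
      - (if j1 = j2 then sm mu (f m) else 0))"

definition idx_tuples :: "nat \<Rightarrow> (nat \<Rightarrow> nat) set" where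
  "idx_tuples n = {i. \<forall>k. k \<notin> {1..n-1} \<longrightarrow> i k = 0}"

text \<open>Exponent shift vector of the monomial x_1^{i_1} x_2^{i_2-i_1} ... x_{n-1}^{i_{n-1}-i_{n-2}} x_n^{-i_{n-1}}
  (the overall factor (x_1...x_n)^mu is the "+mu" built into M~).\<close>
definition u_expo :: "nat \<Rightarrow> (nat \<Rightarrow> nat) \<Rightarrow> (nat \<Rightarrow> int)" where
  "u_expo n i = (\<lambda>k. if k = 1 then int (i 1)
                     else if 2 \<le> k \<and> k \<le> n - 1 then int (i k) - int (i (k - 1))
                     else if k = n then - int (i (n - 1))
                     else 0)"

definition lower_vec :: "nat \<Rightarrow> (nat \<Rightarrow> nat \<Rightarrow> 'v \<Rightarrow> 'v) \<Rightarrow> 'v \<Rightarrow> (nat \<Rightarrow> nat) \<Rightarrow> 'v" where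
  "lower_vec n rho v i = foldr (\<lambda>k w. (rho (k + 1) k ^^ i k) w) [1..<n] v"

definition u_coeff ::
  "(complex \<Rightarrow> 'v \<Rightarrow> 'v) \<Rightarrow> nat \<Rightarrow> (nat \<Rightarrow> nat \<Rightarrow> 'v \<Rightarrow> 'v) \<Rightarrow> 'v
     \<Rightarrow> complex \<Rightarrow> complex \<Rightarrow> (nat \<Rightarrow> nat) \<Rightarrow> 'v" where
  "u_coeff sm n rho v mu sigma i =
     sm ((-1) ^ (\<Sum>k=1..n-1. i k) * ffac mu (i (n - 1))
          / ((\<Prod>k=1..n-1. of_nat (fact (i k))) * ffac sigma (i (n - 1))))
        (lower_vec n rho v i)"

definition u_lambda ::
  "(complex \<Rightarrow> 'v::ab_group_add \<Rightarrow> 'v) \<Rightarrow> nat \<Rightarrow> (nat \<Rightarrow> nat \<Rightarrow> 'v \<Rightarrow> 'v) \<Rightarrow> 'v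
     \<Rightarrow> complex \<Rightarrow> complex \<Rightarrow> ((nat \<Rightarrow> int) \<Rightarrow> 'v)" where
  "u_lambda sm n rho v mu sigma = (\<lambda>m.
     \<Sum>i\<in>{i\<in>idx_tuples n. u_expo n i = m}. u_coeff sm n rho v mu sigma i)"

end

theory Submission
  imports Defs
begin

text \<open>
  The vector
  E_{2,1}^{i_1} ... E_{n,n-1}^{i_{n-1}} v_lambda has weight lambda minus the exponent shift of the
  monomial it is paired with, so every term of u_lambda has weight lambda. Since
  E_{a,b} = [E_{a,c}, E_{c,b}] also on M~, it suffices that the simple root vectors E_{j,j+1} kill
  u_lambda. Commuted up to the factor E_{j+1,j}^{i_j}, the sl_2 relations make E_{j,j+1} produce
  i_j (h - i_j + 1) times the term with i_j lowered by one, where h = mu + i_{j+1} for j < n - 1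
  and h = sigma for j = n - 1; the operator x_j d/dx_{j+1} contributes to the same term, and the two
  contributions cancel because of the recursion of the coefficients in i_j. The hypothesis
  sigma not in N keeps the denominators <sigma>_i nonzero.
\<close>

lemma shift_shift_swap: "a \<noteq> b \<Longrightarrow> shift a b (shift b a m) = m"
  by (auto simp: shift_def)

lemma shift_diag: "shift k k m = m"
  by (simp add: shift_def)

lemma idx_tuples_upd: "i \<in> idx_tuples n \<Longrightarrow> j \<in> {1..n-1} \<Longrightarrow> i(j := x) \<in> idx_tuples n"
  by (auto simp: idx_tuples_def)

lemma u_expo_eq:
  assumes "i \<in> idx_tuples n" "k \<in> {1..n}"
  shows "u_expo n i k = (if k < n then int (i k) else 0) - (if 1 < k then int (i (k - 1)) else 0)"
  using assms by (auto simp: u_expo_def idx_tuples_def)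

lemma inj_on_u_expo: "inj_on (u_expo n) (idx_tuples n)"
proof
  fix i i' assume i: "i \<in> idx_tuples n" and i': "i' \<in> idx_tuples n"
    and eq: "u_expo n i = u_expo n i'"
  show "i = i'"
  proof
    fix k show "i k = i' k"
    proof (induction k)
      case (Suc k)
      have "u_expo n i (Suc k) = u_expo n i' (Suc k)" using eq by simp
      with Suc i i' show ?case by (auto simp: u_expo_def idx_tuples_def split: if_splits)
    qed (use i i' in \<open>auto simp: idx_tuples_def\<close>)
  qed
qed

lemma shift_u_expo:
  assumes "j \<in> {1..n-1}"
  shows "shift (j + 1) j (u_expo n i) = u_expo n (i(j := Suc (i j)))"
proof
  fix k
  show "shift (j + 1) j (u_expo n i) k = u_expo n (i(j := Suc (i j))) k"
    using assms by (cases "k = j"; cases "k = j + 1") (auto simp: shift_def u_expo_def)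
qed

lemma shift_in_u_expo_imageE:
  assumes j: "j \<in> {1..n-1}" and m: "shift j (j + 1) m \<in> u_expo n ` idx_tuples n"
  obtains i where "i \<in> idx_tuples n" "m = u_expo n i" "i j \<noteq> 0"
proof -
  obtain i' where i': "i' \<in> idx_tuples n" "shift j (j + 1) m = u_expo n i'"
    using m by blast
  have "m = shift (j + 1) j (shift j (j + 1) m)"
    by (simp add: shift_shift_swap)
  also have "\<dots> = u_expo n (i'(j := Suc (i' j)))"
    using i'(2) shift_u_expo[OF j] by simp
  finally show ?thesis
    using that[of "i'(j := Suc (i' j))"] idx_tuples_upd[OF i'(1) j] by simp
qed

lemma u_lambda_outside:
  "u_lambda sm n rho v mu sigma m = 0" if "m \<notin> u_expo n ` idx_tuples n"
proof -
  have "{i \<in> idx_tuples n. u_expo n i = m} = {}" using that by blast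
  then show ?thesis unfolding u_lambda_def by (simp only: sum.empty)
qed

definition u_scalar :: "nat \<Rightarrow> complex \<Rightarrow> complex \<Rightarrow> (nat \<Rightarrow> nat) \<Rightarrow> complex" where
  "u_scalar n mu sigma i = (-1) ^ (\<Sum>k=1..n-1. i k) * ffac mu (i (n - 1))
     / ((\<Prod>k=1..n-1. fact (i k)) * ffac sigma (i (n - 1)))"

lemma u_lambda_u_expo:
  assumes "i \<in> idx_tuples n"
  shows "u_lambda sm n rho v mu sigma (u_expo n i)
    = sm (u_scalar n mu sigma i) (lower_vec n rho v i)"
  using assms inj_on_u_expo[of n]
  by (simp add: u_lambda_def u_coeff_def u_scalar_def inj_on_eq_iff cong: conj_cong)

lemma ffac_Suc: "ffac c (Suc s) = ffac c s * (c - of_nat s)"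
  by (simp add: ffac_def)

lemma ffac_nonzero: "c \<notin> \<nat> \<Longrightarrow> ffac c s \<noteq> 0"
  by (auto simp: ffac_def)

lemma u_scalar_step:
  assumes j: "j \<in> {1..n-1}" and sigma: "sigma \<notin> \<nat>"
  shows "of_nat (Suc s) * u_scalar n mu sigma (i(j := Suc s))
       = - (if j = n - 1 then (mu - of_nat s) / (sigma - of_nat s) else 1)
           * u_scalar n mu sigma (i(j := s))"
proof -
  let ?A = "{1..n-1}"
  define R where "R = (\<Sum>k\<in>?A-{j}. i k)"
  define P where "P = (\<Prod>k\<in>?A-{j}. fact (i k) :: complex)"
  have sum_upd: "(\<Sum>k\<in>?A. (i(j := x)) k) = x + R" for x
    using j by (simp add: R_def sum.delta_remove)
  have prod_upd: "(\<Prod>k\<in>?A. fact ((i(j := x)) k) :: complex) = fact x * P" for x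
    using j unfolding P_def by (subst prod.remove[of ?A j]) (auto intro!: prod.cong)
  have u_upd: "u_scalar n mu sigma (i(j := x))
      = (-1) ^ (x + R) * ffac mu ((i(j := x)) (n - 1))
        / (fact x * P * ffac sigma ((i(j := x)) (n - 1)))" for x
    unfolding u_scalar_def sum_upd prod_upd ..
  have nonzero: "P \<noteq> 0" "(1 + of_nat s :: complex) \<noteq> 0" "sigma - of_nat s \<noteq> 0"
    "\<And>t. ffac sigma t \<noteq> 0"
    using sigma ffac_nonzero[OF sigma] of_nat_neq_0[of s, where 'a = complex]
    by (auto simp: P_def of_nat_in_Nats)
  show ?thesis
    using nonzero unfolding u_upd
    by (cases "j = n - 1") (simp_all add: ffac_Suc fact_Suc divide_simps)
qed

text \<open>The first summand is the contribution of E_{j,j+1} acting on M_lambda to the coefficient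
  of lower_tail 1 (i(j := s)) in E_{j,j+1} u_lambda (see raise_lower_tail), the second one that
  of x_j d/dx_{j+1}.\<close>

lemma u_scalar_cancel:
  fixes lam :: "nat \<Rightarrow> complex"
  assumes j: "j \<in> {1..n-1}"
    and mu: "\<forall>k\<in>{1..n-2}. lam k - lam (k + 1) = mu"
    and sigma: "sigma = lam (n - 1) - lam n" "sigma \<notin> \<nat>"
  shows "u_scalar n mu sigma (i(j := Suc s))
           * (of_nat (Suc s) * (lam j - lam (j + 1)
                + (if j + 1 < n then of_nat (i (j + 1)) else 0) - of_nat s))
         + (of_int (u_expo n (i(j := s)) (j + 1)) + mu) * u_scalar n mu sigma (i(j := s)) = 0"
    (is "?u1 * (of_nat (Suc s) * ?h) + ?c * ?u0 = 0")
proof -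
  have step: "of_nat (Suc s) * ?u1
      = - (if j = n - 1 then (mu - of_nat s) / (sigma - of_nat s) else 1) * ?u0"
    using u_scalar_step[OF j sigma(2)] .
  have "?u1 * (of_nat (Suc s) * ?h) = (of_nat (Suc s) * ?u1) * ?h"
    by (simp only: ac_simps)
  also have "\<dots> = - ?c * ?u0"
  proof (cases "j = n - 1")
    case True
    have "sigma - of_nat s \<noteq> 0"
      using sigma(2) by (auto simp: of_nat_in_Nats)
    moreover have h: "?h = sigma - of_nat s" and c: "?c = mu - of_nat s"
      using True j sigma(1) by (auto simp: u_expo_def)
    ultimately show ?thesis
      unfolding step h c using True by (simp add: divide_simps) (simp add: algebra_simps)
  next
    case False
    then have h: "?h = mu + of_nat (i (j + 1)) - of_nat s"
      and c: "?c = mu + of_nat (i (j + 1)) - of_nat s"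
      using j mu by (auto simp: u_expo_def)
    show ?thesis
      unfolding step h c using False by (simp add: algebra_simps)
  qed
  finally show ?thesis by (simp add: algebra_simps)
qed

locale gl_rep =
  fixes sm :: "complex \<Rightarrow> 'a::ab_group_add \<Rightarrow> 'a" and n :: nat
    and rho :: "nat \<Rightarrow> nat \<Rightarrow> 'a \<Rightarrow> 'a"
  assumes gl_module: "gl_module sm n rho"
begin

sublocale vector_space sm
  using gl_module by (simp add: gl_module_def)

lemma rho_hom: "i \<in> {1..n} \<Longrightarrow> j \<in> {1..n} \<Longrightarrow> module_hom sm sm (rho i j)"
  using gl_module by (simp add: gl_module_def module_hom_iff_linear)

lemma rho_commutator:
  "i \<in> {1..n} \<Longrightarrow> j \<in> {1..n} \<Longrightarrow> k \<in> {1..n} \<Longrightarrow> l \<in> {1..n} \<Longrightarrow>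
   rho i j (rho k l w) - rho k l (rho i j w)
     = (if j = k then rho i l w else 0) - (if l = i then rho k j w else 0)"
  using gl_module by (simp add: gl_module_def)

lemma rho_add: "i \<in> {1..n} \<Longrightarrow> j \<in> {1..n} \<Longrightarrow> rho i j (x + y) = rho i j x + rho i j y"
  using rho_hom module_hom.add by blast

lemma rho_scale: "i \<in> {1..n} \<Longrightarrow> j \<in> {1..n} \<Longrightarrow> rho i j (sm c x) = sm c (rho i j x)"
  using rho_hom module_hom.scale by blast

lemma rho_zero: "i \<in> {1..n} \<Longrightarrow> j \<in> {1..n} \<Longrightarrow> rho i j 0 = 0"
  using rho_hom module_hom.zero by blast

lemma rho_pow_scale:
  "i \<in> {1..n} \<Longrightarrow> j \<in> {1..n} \<Longrightarrow> (rho i j ^^ a) (sm c x) = sm c ((rho i j ^^ a) x)"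
  by (induction a) (simp_all add: rho_scale)

lemma rho_pow_zero: "i \<in> {1..n} \<Longrightarrow> j \<in> {1..n} \<Longrightarrow> (rho i j ^^ a) 0 = 0"
  by (induction a) (simp_all add: rho_zero)

lemma weight_lower_pow:
  assumes k: "k \<in> {1..n}" and l: "1 \<le> l" "l < n" and w: "rho k k w = sm \<alpha> w"
  shows "rho k k ((rho (l + 1) l ^^ a) w)
    = sm (\<alpha> + of_nat a * ((if k = l + 1 then 1 else 0) - (if k = l then 1 else 0)))
         ((rho (l + 1) l ^^ a) w)"
proof (induction a)
  case (Suc a)
  let ?F = "rho (l + 1) l"
    and ?\<beta> = "(if k = l + 1 then 1 else 0) - (if k = l then 1 else 0) :: complex"
  have ll: "l \<in> {1..n}" "l + 1 \<in> {1..n}" using l by auto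
  have commute: "rho k k (?F x) = ?F (rho k k x) + sm ?\<beta> (?F x)" for x
    using rho_commutator[OF k k ll(2) ll(1), of x] by (auto simp: algebra_simps)
  have "rho k k ((?F ^^ Suc a) w) = ?F (rho k k ((?F ^^ a) w)) + sm ?\<beta> ((?F ^^ Suc a) w)"
    using commute[of "(?F ^^ a) w"] by simp
  also have "\<dots> = sm (\<alpha> + of_nat a * ?\<beta>) ((?F ^^ Suc a) w) + sm ?\<beta> ((?F ^^ Suc a) w)"
    using Suc ll by (simp add: rho_scale)
  also have "\<dots> = sm (\<alpha> + of_nat (Suc a) * ?\<beta>) ((?F ^^ Suc a) w)"
    by (simp add: algebra_simps)
  finally show ?case .
qed (simp add: w)

lemma raise_lower_commute:
  assumes "1 \<le> j" "j < n" "1 \<le> l" "l < n" "l \<noteq> j"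
  shows "rho j (j + 1) ((rho (l + 1) l ^^ a) x) = (rho (l + 1) l ^^ a) (rho j (j + 1) x)"
proof (induction a)
  case (Suc a)
  then show ?case
    using rho_commutator[of j "j + 1" "l + 1" l "(rho (l + 1) l ^^ a) x"] assms by simp
qed simp

lemma raise_lower_pow:
  assumes j: "1 \<le> j" "j < n" and w: "rho j (j + 1) w = 0"
    and wj: "rho j j w = sm \<alpha> w" and wj1: "rho (j + 1) (j + 1) w = sm \<alpha>' w"
  shows "rho j (j + 1) ((rho (j + 1) j ^^ a) w)
    = sm (of_nat a * (\<alpha> - \<alpha>' - of_nat a + 1)) ((rho (j + 1) j ^^ (a - 1)) w)"
proof (induction a)
  case 0
  then show ?case using w by simp
next
  case (Suc a)
  let ?F = "rho (j + 1) j" and ?c = "of_nat a * (\<alpha> - \<alpha>' - of_nat a + 1)"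
  have jj: "j \<in> {1..n}" "j + 1 \<in> {1..n}" using j by auto
  have raise_lower:
      "rho j (j + 1) (?F x) = ?F (rho j (j + 1) x) + rho j j x - rho (j + 1) (j + 1) x" for x
    using rho_commutator[OF jj(1) jj(2) jj(2) jj(1), of x] by (simp add: algebra_simps)
  have "?F (sm ?c ((?F ^^ (a - 1)) w)) = sm ?c ((?F ^^ a) w)"
    using jj by (cases a) (simp_all add: rho_scale rho_zero)
  moreover have "rho j j ((?F ^^ a) w) = sm (\<alpha> - of_nat a) ((?F ^^ a) w)"
    using weight_lower_pow[OF jj(1) j(1) j(2) wj, of a] by simp
  moreover have "rho (j + 1) (j + 1) ((?F ^^ a) w) = sm (\<alpha>' + of_nat a) ((?F ^^ a) w)"
    using weight_lower_pow[OF jj(2) j(1) j(2) wj1, of a] by simp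
  ultimately have "rho j (j + 1) ((?F ^^ Suc a) w)
      = sm ?c ((?F ^^ a) w) + sm (\<alpha> - of_nat a) ((?F ^^ a) w) - sm (\<alpha>' + of_nat a) ((?F ^^ a) w)"
    using Suc raise_lower[of "(?F ^^ a) w"] by simp
  also have "\<dots> = sm (?c + (\<alpha> - of_nat a) - (\<alpha>' + of_nat a)) ((?F ^^ a) w)"
    by (simp only: scale_left_distrib scale_left_diff_distrib)
  also have "?c + (\<alpha> - of_nat a) - (\<alpha>' + of_nat a) = of_nat (Suc a) * (\<alpha> - \<alpha>' - of_nat (Suc a) + 1)"
    by (simp add: algebra_simps)
  finally show ?case by simp
qed

lemma act_tilde_zero: "a \<in> {1..n} \<Longrightarrow> b \<in> {1..n} \<Longrightarrow> act_tilde sm rho mu a b (\<lambda>m. 0) = (\<lambda>m. 0)"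
  by (simp add: act_tilde_def rho_zero)

lemma act_tilde_commutator:
  assumes a: "a \<in> {1..n}" and b: "b \<in> {1..n}" and c: "c \<in> {1..n}"
    and distinct: "a \<noteq> b" "a \<noteq> c" "b \<noteq> c"
  shows "act_tilde sm rho mu a b f
     = (\<lambda>m. act_tilde sm rho mu a c (act_tilde sm rho mu c b f) m
           - act_tilde sm rho mu c b (act_tilde sm rho mu a c f) m)"
proof
  fix m
  define X Y Z W where "X = f m" and "Y = f (shift c b m)" and "Z = f (shift a c m)"
    and "W = f (shift a b m)"
  define \<alpha> \<beta> \<delta> :: complex
    where "\<alpha> = of_int (m c) + 1 + mu" and "\<beta> = of_int (m b) + 1 + mu" and "\<delta> = of_int (m c) + mu"
  have shifts: "shift c b (shift a c m) = shift a b m" "shift a c (shift c b m) = shift a b m"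
    using distinct by (auto simp: shift_def fun_eq_iff)
  have entries: "shift a c m c = m c + 1" "shift c b m b = m b + 1" "shift a b m b = m b + 1"
    "shift c b (shift a c m) b = m b + 1" "shift a c (shift c b m) c = m c"
    using distinct by (auto simp: shift_def)
  have lhs: "act_tilde sm rho mu a b f m = rho a b X + sm \<beta> W"
    using distinct entries by (simp add: act_tilde_def X_def W_def \<beta>_def)
  have ac_cb: "act_tilde sm rho mu a c (act_tilde sm rho mu c b f) m
     = rho a c (rho c b X) + sm \<beta> (rho a c Y) + sm \<alpha> (rho c b Z) + sm (\<alpha> * \<beta>) W"
    using distinct entries shifts a c
    by (simp add: act_tilde_def X_def Y_def Z_def W_def \<alpha>_def \<beta>_def
        rho_add rho_scale scale_right_distrib scale_scale add.assoc)
  have cb_ac: "act_tilde sm rho mu c b (act_tilde sm rho mu a c f) m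
     = rho c b (rho a c X) + sm \<alpha> (rho c b Z) + sm \<beta> (rho a c Y) + sm (\<beta> * \<delta>) W"
    using distinct entries shifts c b
    by (simp add: act_tilde_def X_def Y_def Z_def W_def \<alpha>_def \<beta>_def \<delta>_def
        rho_add rho_scale scale_right_distrib scale_scale add.assoc)
  have comm: "rho a c (rho c b X) - rho c b (rho a c X) = rho a b X"
    using rho_commutator[OF a c c b, of X] distinct by simp
  have coeff: "\<alpha> * \<beta> - \<beta> * \<delta> = \<beta>"
    by (simp add: \<alpha>_def \<beta>_def \<delta>_def algebra_simps)
  have "act_tilde sm rho mu a c (act_tilde sm rho mu c b f) m
          - act_tilde sm rho mu c b (act_tilde sm rho mu a c f) m
        = (rho a c (rho c b X) - rho c b (rho a c X)) + (sm (\<alpha> * \<beta>) W - sm (\<beta> * \<delta>) W)"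
    unfolding ac_cb cb_ac by (simp add: algebra_simps)
  also have "\<dots> = act_tilde sm rho mu a b f m"
    unfolding comm lhs scale_left_diff_distrib[symmetric] coeff ..
  finally show "act_tilde sm rho mu a b f m
     = act_tilde sm rho mu a c (act_tilde sm rho mu c b f) m
       - act_tilde sm rho mu c b (act_tilde sm rho mu a c f) m" ..
qed

end

locale gl_highest_weight = gl_rep +
  fixes lam :: "nat \<Rightarrow> complex" and v
  assumes raising_annihilates: "i \<in> {1..n} \<Longrightarrow> j \<in> {1..n} \<Longrightarrow> i < j \<Longrightarrow> rho i j v = 0"
    and weight_vector: "k \<in> {1..n} \<Longrightarrow> rho k k v = sm (lam k) v"
begin

definition lower_tail :: "nat \<Rightarrow> (nat \<Rightarrow> nat) \<Rightarrow> 'a" where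
  "lower_tail l i = foldr (\<lambda>k w. (rho (k + 1) k ^^ i k) w) [l..<n] v"

lemma lower_vec_eq: "lower_vec n rho v i = lower_tail 1 i"
  by (simp add: lower_vec_def lower_tail_def)

lemma lower_tail_step: "l < n \<Longrightarrow> lower_tail l i = (rho (l + 1) l ^^ i l) (lower_tail (Suc l) i)"
  by (simp add: lower_tail_def upt_conv_Cons)

lemma lower_tail_end: "n \<le> l \<Longrightarrow> lower_tail l i = v"
  by (simp add: lower_tail_def)

lemma lower_tail_cong: "(\<And>k. l \<le> k \<Longrightarrow> k < n \<Longrightarrow> i k = i' k) \<Longrightarrow> lower_tail l i = lower_tail l i'"
  unfolding lower_tail_def by (rule foldr_cong) auto

lemma lower_tail_weight:
  assumes k: "k \<in> {1..n}" and l: "1 \<le> l"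
  shows "rho k k (lower_tail l i)
    = sm (lam k + (if l < k then of_nat (i (k - 1)) else 0)
            - (if l \<le> k \<and> k < n then of_nat (i k) else 0))
         (lower_tail l i)"
  using l
proof (induction "n - l" arbitrary: l)
  case 0
  then show ?case using weight_vector[OF k] k by (simp add: lower_tail_end)
next
  case (Suc d)
  then have "l < n" by simp
  have IH: "rho k k (lower_tail (Suc l) i)
    = sm (lam k + (if Suc l < k then of_nat (i (k - 1)) else 0)
            - (if Suc l \<le> k \<and> k < n then of_nat (i k) else 0))
         (lower_tail (Suc l) i)"
    using Suc by simp
  show ?case
    unfolding lower_tail_step[OF \<open>l < n\<close>] weight_lower_pow[OF k Suc.prems \<open>l < n\<close> IH]
    by (rule arg_cong[where f = "\<lambda>c. sm c _"])
      (use k \<open>l < n\<close> in \<open>cases "k = l + 1"; cases "k = l"; auto simp: algebra_simps\<close>)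
qed

lemma raise_lower_tail_above:
  assumes j: "1 \<le> j" "j < n" and l: "j < l"
  shows "rho j (j + 1) (lower_tail l i) = 0"
  using l
proof (induction "n - l" arbitrary: l)
  case 0
  then show ?case using raising_annihilates[of j "j + 1"] j by (simp add: lower_tail_end)
next
  case (Suc d)
  then have "l < n" by simp
  then show ?case
    using Suc raise_lower_commute[of j l] j
    by (simp add: lower_tail_step rho_pow_zero)
qed

lemma raise_lower_tail:
  assumes j: "1 \<le> j" "j < n" and l: "1 \<le> l" "l \<le> j"
  shows "rho j (j + 1) (lower_tail l i)
    = sm (of_nat (i j) * (lam j - lam (j + 1) + (if j + 1 < n then of_nat (i (j + 1)) else 0)
            - of_nat (i j) + 1))
         (lower_tail l (i(j := i j - 1)))"
  using l
proof (induction "j - l" arbitrary: l)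
  case 0
  then have "l = j" by simp
  have jj: "j \<in> {1..n}" "j + 1 \<in> {1..n}" using j by auto
  have tail: "lower_tail (Suc j) (i(j := i j - 1)) = lower_tail (Suc j) i"
    by (rule lower_tail_cong) auto
  show ?case
    unfolding \<open>l = j\<close> lower_tail_step[OF j(2)] tail
    using raise_lower_pow[OF j raise_lower_tail_above[OF j, of "Suc j"]
        lower_tail_weight[OF jj(1)] lower_tail_weight[OF jj(2)], of "i j"] j
    by (simp add: algebra_simps)
next
  case (Suc d)
  then have "l < j" "l < n" using j by auto
  then show ?case
    using Suc raise_lower_commute[of j l] j
    by (simp add: lower_tail_step rho_pow_scale)
qed

lemma raise_u_lambda_u_expo:
  assumes j: "1 \<le> j" "j < n" and i: "i \<in> idx_tuples n"
  shows "rho j (j + 1) (u_lambda sm n rho v mu sigma (u_expo n i))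
    = sm (u_scalar n mu sigma i * (of_nat (i j) * (lam j - lam (j + 1)
            + (if j + 1 < n then of_nat (i (j + 1)) else 0) - of_nat (i j) + 1)))
         (lower_tail 1 (i(j := i j - 1)))"
proof -
  have jj: "j \<in> {1..n}" "j + 1 \<in> {1..n}"
    using j by auto
  show ?thesis
    unfolding u_lambda_u_expo[OF i] lower_vec_eq rho_scale[OF jj]
      raise_lower_tail[OF j order_refl j(1)] scale_scale ..
qed

lemma act_tilde_diag_u_lambda:
  assumes k: "k \<in> {1..n}"
  shows "act_tilde sm rho mu k k (u_lambda sm n rho v mu sigma)
       = (\<lambda>m. sm (lam k) (u_lambda sm n rho v mu sigma m))"
proof
  fix m
  let ?U = "u_lambda sm n rho v mu sigma"
  have act: "act_tilde sm rho mu k k ?U m = rho k k (?U m) + sm (of_int (m k)) (?U m)"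
    by (simp add: act_tilde_def shift_diag algebra_simps)
  show "act_tilde sm rho mu k k ?U m = sm (lam k) (?U m)"
  proof (cases "m \<in> u_expo n ` idx_tuples n")
    case True
    then obtain i where i: "i \<in> idx_tuples n" and m: "m = u_expo n i" by blast
    have "lam k + (if 1 < k then of_nat (i (k - 1)) else 0)
          - (if 1 \<le> k \<and> k < n then of_nat (i k) else 0)
        = lam k - of_int (m k)"
      using u_expo_eq[OF i k] k unfolding m by simp
    then have weight: "rho k k (lower_tail 1 i) = sm (lam k - of_int (m k)) (lower_tail 1 i)"
      using lower_tail_weight[OF k order_refl, of i] by simp
    have Um: "?U m = sm (u_scalar n mu sigma i) (lower_tail 1 i)"
      unfolding m u_lambda_u_expo[OF i] lower_vec_eq ..
    have "act_tilde sm rho mu k k ?U m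
        = sm (u_scalar n mu sigma i * (lam k - of_int (m k)) + of_int (m k) * u_scalar n mu sigma i)
             (lower_tail 1 i)"
      unfolding act Um rho_scale[OF k k] weight scale_scale scale_left_distrib ..
    also have "\<dots> = sm (lam k) (?U m)"
      unfolding Um scale_scale by (simp add: algebra_simps)
    finally show ?thesis .
  next
    case False
    then show ?thesis
      using k by (simp add: act u_lambda_outside rho_zero)
  qed
qed

lemma act_tilde_simple_root_u_lambda:
  assumes j: "1 \<le> j" "j < n"
    and mu: "\<forall>k\<in>{1..n-2}. lam k - lam (k + 1) = mu"
    and sigma: "sigma = lam (n - 1) - lam n" "sigma \<notin> \<nat>"
  shows "act_tilde sm rho mu j (j + 1) (u_lambda sm n rho v mu sigma) = (\<lambda>m. 0)"
proof
  fix m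
  let ?U = "u_lambda sm n rho v mu sigma" and ?m' = "shift j (j + 1) m"
  have jj: "j \<in> {1..n}" "j + 1 \<in> {1..n}" and j': "j \<in> {1..n-1}"
    using j by auto
  have act: "act_tilde sm rho mu j (j + 1) ?U m
      = rho j (j + 1) (?U m) + sm (of_int (?m' (j + 1)) + mu) (?U ?m')"
    by (simp add: act_tilde_def)
  show "act_tilde sm rho mu j (j + 1) ?U m = 0"
  proof (cases "\<exists>i\<in>idx_tuples n. m = u_expo n i \<and> i j \<noteq> 0")
    case True
    then obtain i s where i: "i \<in> idx_tuples n" "m = u_expo n i" and s: "i j = Suc s"
      using not0_implies_Suc by blast
    let ?i' = "i(j := s)"
    have i': "?i' \<in> idx_tuples n"
      using idx_tuples_upd[OF i(1) j'] .
    have "m = shift (j + 1) j (u_expo n ?i')"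
      using i(2) s shift_u_expo[OF j', of ?i'] by (simp add: fun_upd_idem)
    then have m': "?m' = u_expo n ?i'"
      by (simp add: shift_shift_swap)
    have raise: "rho j (j + 1) (?U m)
        = sm (u_scalar n mu sigma i * (of_nat (Suc s) * (lam j - lam (j + 1)
                + (if j + 1 < n then of_nat (i (j + 1)) else 0) - of_nat s)))
             (lower_tail 1 ?i')"
      unfolding i(2) raise_u_lambda_u_expo[OF j i(1)] s by (simp add: algebra_simps)
    have shifted: "?U ?m' = sm (u_scalar n mu sigma ?i') (lower_tail 1 ?i')"
      unfolding m' u_lambda_u_expo[OF i'] lower_vec_eq ..
    have "u_scalar n mu sigma i * (of_nat (Suc s) * (lam j - lam (j + 1)
                + (if j + 1 < n then of_nat (i (j + 1)) else 0) - of_nat s))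
          + (of_int (?m' (j + 1)) + mu) * u_scalar n mu sigma ?i' = 0"
      using u_scalar_cancel[OF j' mu sigma, of i s] s unfolding m' by (simp add: fun_upd_idem)
    then show ?thesis
      unfolding act raise shifted scale_scale scale_left_distrib[symmetric] by simp
  next
    case False
    have shifted: "?U ?m' = 0"
      using shift_in_u_expo_imageE[OF j'] False u_lambda_outside by metis
    have raise: "rho j (j + 1) (?U m) = 0"
    proof (cases "m \<in> u_expo n ` idx_tuples n")
      case True
      then obtain i where i: "i \<in> idx_tuples n" "m = u_expo n i" and "i j = 0"
        using False by blast
      then show ?thesis
        unfolding i(2) raise_u_lambda_u_expo[OF j i(1)] by simp
    next
      case False
      then show ?thesis
        using jj by (simp add: u_lambda_outside rho_zero)
    qed
    show ?thesis
      unfolding act raise shifted by simp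
  qed
qed

lemma act_tilde_raising_u_lambda:
  assumes mu: "\<forall>k\<in>{1..n-2}. lam k - lam (k + 1) = mu"
    and sigma: "sigma = lam (n - 1) - lam n" "sigma \<notin> \<nat>"
    and a: "1 \<le> a" and b: "a < b" "b \<le> n"
  shows "act_tilde sm rho mu a b (u_lambda sm n rho v mu sigma) = (\<lambda>m. 0)"
  using b
proof (induction b)
  case 0
  then show ?case by simp
next
  case (Suc b)
  let ?U = "u_lambda sm n rho v mu sigma"
  show ?case
  proof (cases "b = a")
    case True
    then show ?thesis
      using act_tilde_simple_root_u_lambda[OF a _ mu sigma] Suc.prems by simp
  next
    case False
    then have "a < b" "b < n"
      using Suc.prems by auto
    then have "act_tilde sm rho mu a b ?U = (\<lambda>m. 0)"
      and "act_tilde sm rho mu b (Suc b) ?U = (\<lambda>m. 0)"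
      using Suc.IH act_tilde_simple_root_u_lambda[of b, OF _ _ mu sigma] a by auto
    moreover have "a \<in> {1..n}" "Suc b \<in> {1..n}" "b \<in> {1..n}"
      using a \<open>a < b\<close> \<open>b < n\<close> by auto
    ultimately show ?thesis
      using act_tilde_commutator[of a "Suc b" b _ ?U] \<open>a < b\<close> by (simp add: act_tilde_zero)
  qed
qed

end

theorem lemma3p1:
  fixes sm :: "complex \<Rightarrow> 'v::ab_group_add \<Rightarrow> 'v"
    and n :: nat and mu sigma :: complex and lam :: "nat \<Rightarrow> complex"
    and rho :: "nat \<Rightarrow> nat \<Rightarrow> 'v \<Rightarrow> 'v" and v :: 'v
  assumes "n \<ge> 3"
    and "\<forall>k\<in>{1..n-2}. lam k - lam (k + 1) = mu"
    and "sigma = lam (n - 1) - lam n"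
    and "sigma \<notin> \<nat>"
    and "verma_module sm n rho lam v"
  shows "(\<forall>i\<in>{1..n}. \<forall>j\<in>{1..n}. i < j \<longrightarrow>
            act_tilde sm rho mu i j (u_lambda sm n rho v mu sigma) = (\<lambda>m. 0))
       \<and> (\<forall>k\<in>{1..n}. act_tilde sm rho mu k k (u_lambda sm n rho v mu sigma)
            = (\<lambda>m. sm (lam k) (u_lambda sm n rho v mu sigma m)))"
proof -
  interpret gl_highest_weight sm n rho lam v
    using assms(5) by unfold_locales (auto simp: verma_module_def)
  show ?thesis
    using act_tilde_raising_u_lambda[OF assms(2-4)] act_tilde_diag_u_lambda by auto
qed

end
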